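(* Let $G_1$ and $G_2$ be connected graphs, where $G_1$ has at least two vertices. Then $$\chi_d^t(G_1\star G_2)\leq \chi_d^t(G_1)+|V(G_2)|.$$
   Context: All graphs are simple and finite. A total dominator coloring (TD-coloring) of a graph $G$ with no isolated vertex is a proper vertex coloring of $G$ in which every vertex of $G$ is adjacent to every vertex of some color class (a color class being the set of all vertices receiving a given color). The total dominator chromatic number (TDC-number) $\chi_d^t(G)$ is the minimum number of colors in a TD-coloring of $G$. The neighbourhood corona $G_1\star G_2$ of graphs $G_1$ and $G_2$ is the graph obtained by taking one copy of $G_1$ and $|V(G_1)|$ copies of $G_2$, and, for each $i$, joining every neighbour (in $G_1$) of the $i$-th vertex of $G_1$ to every vertex of the $i$-th copy of $G_2$. *)

theory Defs
  imports Main
begin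

definition simple_graph :: "'a set \<Rightarrow> ('a \<Rightarrow> 'a \<Rightarrow> bool) \<Rightarrow> bool" where
  "simple_graph V E \<longleftrightarrow> finite V \<and>
     (\<forall>x y. E x y \<longrightarrow> x \<in> V \<and> y \<in> V \<and> x \<noteq> y \<and> E y x)"

definition connected_graph :: "'a set \<Rightarrow> ('a \<Rightarrow> 'a \<Rightarrow> bool) \<Rightarrow> bool" where
  "connected_graph V E \<longleftrightarrow> V \<noteq> {} \<and> (\<forall>x\<in>V. \<forall>y\<in>V. E\<^sup>*\<^sup>* x y)"

definition td_coloring :: "'a set \<Rightarrow> ('a \<Rightarrow> 'a \<Rightarrow> bool) \<Rightarrow> ('a \<Rightarrow> nat) \<Rightarrow> bool" where
  "td_coloring V E c \<longleftrightarrow>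
     (\<forall>x\<in>V. \<forall>y\<in>V. E x y \<longrightarrow> c x \<noteq> c y) \<and>
     (\<forall>v\<in>V. \<exists>k\<in>c ` V. \<forall>u\<in>V. c u = k \<longrightarrow> E v u)"

definition tdc_number :: "'a set \<Rightarrow> ('a \<Rightarrow> 'a \<Rightarrow> bool) \<Rightarrow> nat" where
  "tdc_number V E = (LEAST n. \<exists>c. td_coloring V E c \<and> card (c ` V) = n)"

text \<open>Neighbourhood corona G1 \<star> G2: vertices Inl i (copy of G1) and Inr (i, x)
  (vertex x of the i-th copy of G2); every neighbour of i in G1 is joined to
  every vertex of the i-th copy of G2.\<close>
definition ncorona_V :: "'a set \<Rightarrow> 'b set \<Rightarrow> ('a + 'a \<times> 'b) set" where
  "ncorona_V V1 V2 = Inl ` V1 \<union> Inr ` (V1 \<times> V2)"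

fun ncorona_E :: "('a \<Rightarrow> 'a \<Rightarrow> bool) \<Rightarrow> ('b \<Rightarrow> 'b \<Rightarrow> bool)
    \<Rightarrow> ('a + 'a \<times> 'b) \<Rightarrow> ('a + 'a \<times> 'b) \<Rightarrow> bool" where
  "ncorona_E E1 E2 (Inl i) (Inl j) = E1 i j"
| "ncorona_E E1 E2 (Inr (i, x)) (Inr (j, y)) = (i = j \<and> E2 x y)"
| "ncorona_E E1 E2 (Inl j) (Inr (i, x)) = E1 j i"
| "ncorona_E E1 E2 (Inr (i, x)) (Inl j) = E1 j i"

end

theory Submission
  imports Defs
begin

text \<open>Colour the copy of \<open>G\<^sub>1\<close> by an optimal TD-colouring \<open>c\<close>, and give the vertex
  \<open>x\<close> of every copy of \<open>G\<^sub>2\<close> a fresh colour depending only on \<open>x\<close>, so at most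
  \<open>|V(G\<^sub>2)|\<close> new colours appear. The colouring stays proper because the copies of
  \<open>G\<^sub>2\<close> are pairwise non-adjacent. A vertex of \<open>G\<^sub>1\<close> and every vertex of the
  \<open>i\<close>-th copy of \<open>G\<^sub>2\<close> have the same neighbours in \<open>G\<^sub>1\<close>, namely those of \<open>i\<close>,
  so each of them dominates the \<open>c\<close>-class that \<open>i\<close> dominates; this class consists
  of \<open>G\<^sub>1\<close>-vertices only, since the fresh colours differ from all values of \<open>c\<close>.\<close>

lemma simple_graph_edgeD:
  assumes "simple_graph V E" and "E x y"
  shows "x \<in> V" "y \<in> V" "x \<noteq> y" "E y x"
  using assms unfolding simple_graph_def by auto

lemma connected_graph_has_neighbour:
  assumes "connected_graph V E" and "card V \<ge> 2" and "v \<in> V"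
  shows "\<exists>u. E v u"
proof -
  obtain w where w: "w \<in> V" "w \<noteq> v"
  proof (rule ccontr)
    assume "\<not> thesis"
    then have "V \<subseteq> {v}" using that by blast
    then have "card V \<le> 1"
      using assms(2) card_mono[of "{v}" V] by (cases "finite V") auto
    with assms(2) show False by simp
  qed
  have "E\<^sup>*\<^sup>* v w" using assms(1,3) w(1) unfolding connected_graph_def by blast
  then show ?thesis using w(2) by (cases rule: converse_rtranclpE) auto
qed

lemma inj_on_td_coloring:
  assumes "simple_graph V E" and "\<And>v. v \<in> V \<Longrightarrow> \<exists>u. E v u" and "inj_on c V"
  shows "td_coloring V E c"
  unfolding td_coloring_def
proof (intro conjI ballI impI)
  fix x y assume "x \<in> V" "y \<in> V" "E x y"
  moreover have "x \<noteq> y" using assms(1) \<open>E x y\<close> by (rule simple_graph_edgeD)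
  ultimately show "c x \<noteq> c y" using assms(3) by (auto dest: inj_onD)
next
  fix v assume "v \<in> V"
  then obtain u where u: "E v u" using assms(2) by blast
  have "u \<in> V" using assms(1) u by (rule simple_graph_edgeD)
  then show "\<exists>k\<in>c ` V. \<forall>u'\<in>V. c u' = k \<longrightarrow> E v u'"
    using u assms(3) by (intro bexI[of _ "c u"]) (auto dest: inj_onD)
qed

lemma td_coloring_exists:
  assumes "simple_graph V E" and "\<And>v. v \<in> V \<Longrightarrow> \<exists>u. E v u"
  shows "\<exists>c. td_coloring V E c"
proof -
  have "finite V" using assms(1) by (simp add: simple_graph_def)
  then obtain c :: "_ \<Rightarrow> nat" where "inj_on c V"
    using finite_imp_inj_to_nat_seg by blast
  with assms have "td_coloring V E c" by (rule inj_on_td_coloring)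
  then show ?thesis by blast
qed

lemma tdc_number_attained:
  assumes "td_coloring V E c\<^sub>0"
  obtains c where "td_coloring V E c" and "card (c ` V) = tdc_number V E"
proof -
  have "\<exists>c. td_coloring V E c \<and> card (c ` V) = card (c\<^sub>0 ` V)" using assms by blast
  then have "\<exists>c. td_coloring V E c \<and> card (c ` V) = tdc_number V E"
    unfolding tdc_number_def by (rule LeastI)
  then show ?thesis using that by blast
qed

lemma tdc_number_le_card:
  assumes "td_coloring V E c"
  shows "tdc_number V E \<le> card (c ` V)"
  unfolding tdc_number_def using assms by (intro Least_le) blast

definition ncorona_coloring ::
    "('a \<Rightarrow> nat) \<Rightarrow> nat \<Rightarrow> ('b \<Rightarrow> nat) \<Rightarrow> 'a + 'a \<times> 'b \<Rightarrow> nat" where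
  "ncorona_coloring c M g = case_sum c (\<lambda>(i, x). M + g x)"

lemma ncorona_coloring_simps [simp]:
  "ncorona_coloring c M g (Inl v) = c v"
  "ncorona_coloring c M g (Inr (i, x)) = M + g x"
  unfolding ncorona_coloring_def by simp_all

lemma ncorona_V_cases:
  assumes "w \<in> ncorona_V V1 V2"
  obtains (copy1) v where "w = Inl v" "v \<in> V1"
    | (copy2) i x where "w = Inr (i, x)" "i \<in> V1" "x \<in> V2"
  using assms unfolding ncorona_V_def by blast

lemma ncorona_coloring_image:
  "ncorona_coloring c M g ` ncorona_V V1 V2 \<subseteq> c ` V1 \<union> (\<lambda>x. M + g x) ` V2"
  unfolding ncorona_V_def by auto

lemma ncorona_coloring_proper:
  assumes "simple_graph V2 E2" and "inj_on g V2"
    and c_below: "\<And>v. v \<in> V1 \<Longrightarrow> c v < M"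
    and c_proper: "\<And>x y. x \<in> V1 \<Longrightarrow> y \<in> V1 \<Longrightarrow> E1 x y \<Longrightarrow> c x \<noteq> c y"
    and "x \<in> ncorona_V V1 V2" "y \<in> ncorona_V V1 V2" "ncorona_E E1 E2 x y"
  shows "ncorona_coloring c M g x \<noteq> ncorona_coloring c M g y"
  using assms(5)
proof (cases rule: ncorona_V_cases)
  case x_eq: (copy1 a)
  from assms(6) show ?thesis
  proof (cases rule: ncorona_V_cases)
    case (copy1 b)
    with x_eq assms(7) c_proper show ?thesis by simp
  next
    case (copy2 j t)
    with x_eq c_below[of a] show ?thesis by simp
  qed
next
  case x_eq: (copy2 i z)
  from assms(6) show ?thesis
  proof (cases rule: ncorona_V_cases)
    case (copy1 b)
    with x_eq c_below[of b] show ?thesis by simp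
  next
    case (copy2 j t)
    then have "E2 z t" using x_eq assms(7) by simp
    then have "z \<in> V2" "t \<in> V2" "z \<noteq> t" by (rule simple_graph_edgeD[OF assms(1)])+
    then show ?thesis using x_eq copy2 assms(2) by (auto dest: inj_onD)
  qed
qed

lemma ncorona_coloring_dominates:
  assumes c_dom: "\<And>v. v \<in> V1 \<Longrightarrow> \<exists>k\<in>c ` V1. \<forall>u\<in>V1. c u = k \<longrightarrow> E1 v u"
    and c_below: "\<And>v. v \<in> V1 \<Longrightarrow> c v < M"
    and "a \<in> V1" and w_adj: "\<And>u. E1 a u \<Longrightarrow> ncorona_E E1 E2 w (Inl u)"
  shows "\<exists>k\<in>ncorona_coloring c M g ` ncorona_V V1 V2.
           \<forall>u\<in>ncorona_V V1 V2. ncorona_coloring c M g u = k \<longrightarrow> ncorona_E E1 E2 w u"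
proof -
  obtain u\<^sub>0 where u\<^sub>0: "u\<^sub>0 \<in> V1" and dom: "\<forall>u\<in>V1. c u = c u\<^sub>0 \<longrightarrow> E1 a u"
    using c_dom[OF \<open>a \<in> V1\<close>] by blast
  have "c u\<^sub>0 \<in> ncorona_coloring c M g ` ncorona_V V1 V2"
    using u\<^sub>0 unfolding ncorona_V_def by (intro image_eqI[of _ _ "Inl u\<^sub>0"]) auto
  moreover have "ncorona_E E1 E2 w u"
    if "u \<in> ncorona_V V1 V2" and "ncorona_coloring c M g u = c u\<^sub>0" for u
    using that(1)
  proof (cases rule: ncorona_V_cases)
    case (copy1 b)
    then show ?thesis using that(2) dom w_adj by auto
  next
    case (copy2 i x)
    then show ?thesis using that(2) c_below[OF u\<^sub>0] by simp
  qed
  ultimately show ?thesis by blast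
qed

lemma ncorona_td_coloring:
  assumes "simple_graph V1 E1" and "simple_graph V2 E2"
    and "td_coloring V1 E1 c" and "inj_on g V2" and c_below: "\<And>v. v \<in> V1 \<Longrightarrow> c v < M"
  shows "td_coloring (ncorona_V V1 V2) (ncorona_E E1 E2) (ncorona_coloring c M g)"
proof -
  have c_proper: "\<And>x y. x \<in> V1 \<Longrightarrow> y \<in> V1 \<Longrightarrow> E1 x y \<Longrightarrow> c x \<noteq> c y"
    and c_dom: "\<And>v. v \<in> V1 \<Longrightarrow> \<exists>k\<in>c ` V1. \<forall>u\<in>V1. c u = k \<longrightarrow> E1 v u"
    using assms(3) unfolding td_coloring_def by auto
  show ?thesis
    unfolding td_coloring_def
  proof (intro conjI ballI impI)
    fix x y
    assume "x \<in> ncorona_V V1 V2" "y \<in> ncorona_V V1 V2" "ncorona_E E1 E2 x y"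
    with assms(2,4) c_below c_proper
    show "ncorona_coloring c M g x \<noteq> ncorona_coloring c M g y"
      by (rule ncorona_coloring_proper)
  next
    fix w assume "w \<in> ncorona_V V1 V2"
    then show "\<exists>k\<in>ncorona_coloring c M g ` ncorona_V V1 V2.
        \<forall>u\<in>ncorona_V V1 V2. ncorona_coloring c M g u = k \<longrightarrow> ncorona_E E1 E2 w u"
    proof (cases rule: ncorona_V_cases)
      case (copy1 a)
      then show ?thesis using c_dom c_below by (intro ncorona_coloring_dominates) auto
    next
      case (copy2 i x)
      then show ?thesis
        using c_dom c_below simple_graph_edgeD(4)[OF assms(1)]
        by (intro ncorona_coloring_dominates) auto
    qed
  qed
qed

theorem theorem2:
  fixes V1 :: "'a set" and E1 :: "'a \<Rightarrow> 'a \<Rightarrow> bool"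
    and V2 :: "'b set" and E2 :: "'b \<Rightarrow> 'b \<Rightarrow> bool"
  assumes "simple_graph V1 E1" and "connected_graph V1 E1" and "card V1 \<ge> 2"
    and "simple_graph V2 E2" and "connected_graph V2 E2"
  shows "tdc_number (ncorona_V V1 V2) (ncorona_E E1 E2)
           \<le> tdc_number V1 E1 + card V2"
proof -
  have fin1: "finite V1" and fin2: "finite V2"
    using assms(1,4) unfolding simple_graph_def by auto
  obtain c\<^sub>0 where "td_coloring V1 E1 c\<^sub>0"
    using td_coloring_exists[OF assms(1)] connected_graph_has_neighbour[OF assms(2,3)] by blast
  then obtain c where c: "td_coloring V1 E1 c" and c_opt: "card (c ` V1) = tdc_number V1 E1"
    by (rule tdc_number_attained)
  obtain g :: "'b \<Rightarrow> nat" where g: "inj_on g V2"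
    using finite_imp_inj_to_nat_seg[OF fin2] by blast
  define M where "M = Suc (Max (c ` V1))"
  have c_below: "c v < M" if "v \<in> V1" for v
    unfolding M_def using fin1 that by (simp add: le_imp_less_Suc)
  from assms(1,4) c g c_below
  have "td_coloring (ncorona_V V1 V2) (ncorona_E E1 E2) (ncorona_coloring c M g)"
    by (rule ncorona_td_coloring)
  then have "tdc_number (ncorona_V V1 V2) (ncorona_E E1 E2)
      \<le> card (ncorona_coloring c M g ` ncorona_V V1 V2)" by (rule tdc_number_le_card)
  also have "\<dots> \<le> card (c ` V1 \<union> (\<lambda>x. M + g x) ` V2)"
    using fin1 fin2 by (intro card_mono ncorona_coloring_image) auto
  also have "\<dots> \<le> card (c ` V1) + card ((\<lambda>x. M + g x) ` V2)" by (rule card_Un_le)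
  also have "\<dots> \<le> tdc_number V1 E1 + card V2" using c_opt card_image_le[OF fin2] by simp
  finally show ?thesis .
qed

end
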